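(* Let $N\ge1$, $\psi\in[-\pi,\pi]$, and $(w,a,\theta)\in\widetilde{\mathcal{D}}_N(\psi)$. There exists $\omega_0<0$ such that $M_{\mathrm{e}^{i\omega}}(w,a,\theta)\in\mathcal{D}_N(\psi)$ for every real $\omega$ with $\omega_0\le\omega<0$.
   Context: $P_N=\{1,\dots,N\}$; vectors are functions on $P_N$, $v^{-1}[S]=\{\ell:v_\ell\in S\}$, $\mathrm{Tr}(v,\Lambda):=\sum_{\ell\in\Lambda}v_\ell$. $\mathcal{C}:=\{z:\mathrm{Re}(z)>0\text{ or }z\in i\mathbb{R}_{>0}\}$, $\mathcal{C}^\circ$ the open right half-plane. $\mathbb{D}_N:=\{(w,a,\theta)\in\mathbb{C}\times\mathbb{C}^N\times\mathbb{R}^N:a^{-1}[0]\subseteq\theta^{-1}[\mathbb{R}\smallsetminus\mathbb{Z}]\}$, $\pi(w,a,\theta):=w-\mathrm{Tr}(a,a^{-1}[-\mathcal{C}])$, $M_\beta(w,a,\theta):=(\beta w,\beta a,\theta)$. $\widetilde{\mathcal{D}}_N:=\pi^{-1}[\mathcal{C}]$; $\mathcal{D}_N:=\{(w,a,\theta)\in\mathbb{D}_N:\pi(w,a,\theta)\in\mathcal{C}^\circ,\ a_\ell\notin i\mathbb{R}\smallsetminus\{0\}\ \forall\ell\}$. $\mathcal{D}_N(\psi):=\mathcal{D}_N\cap M_{\mathrm{e}^{i\psi}}^{-1}[\mathcal{D}_N]\cap\bigcap_{0<\mathrm{sgn}(\psi)t<|\psi|}(\pi\circ M_{\mathrm{e}^{it}})^{-1}[\mathcal{C}]$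 (so $\mathcal{D}_N(0)=\mathcal{D}_N$). For $\psi\ne0$, $\widetilde{\mathcal{D}}_N(\psi):=\bigcap_{0\le\mathrm{sgn}(\psi)t\le|\psi|}(\pi\circ M_{\mathrm{e}^{it}})^{-1}[\mathcal{C}]$, and $\widetilde{\mathcal{D}}_N(0):=\widetilde{\mathcal{D}}_N$. *)

theory Defs
  imports Complex_Main
begin

text \<open>Points of the domain are triples (w, a, theta) with w complex,
  a : {1..N} -> complex, theta : {1..N} -> real; vectors are represented as
  functions on nat of which only the values on {1..N} matter.\<close>

type_synonym triple = "complex \<times> (nat \<Rightarrow> complex) \<times> (nat \<Rightarrow> real)"

definition Cset :: "complex set" where
  "Cset = {z. Re z > 0 \<or> (Re z = 0 \<and> Im z > 0)}"

definition Copen :: "complex set" where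
  "Copen = {z. Re z > 0}"

definition preim :: "nat \<Rightarrow> (nat \<Rightarrow> 'b) \<Rightarrow> 'b set \<Rightarrow> nat set" where
  "preim N v S = {l \<in> {1..N}. v l \<in> S}"

definition Tr :: "(nat \<Rightarrow> complex) \<Rightarrow> nat set \<Rightarrow> complex" where
  "Tr v L = (\<Sum>l\<in>L. v l)"

definition DD :: "nat \<Rightarrow> triple set" where
  "DD N = {(w, a, \<theta>). preim N a {0} \<subseteq> preim N \<theta> (UNIV - \<int>)}"

definition piN :: "nat \<Rightarrow> triple \<Rightarrow> complex" where
  "piN N x = (case x of (w, a, \<theta>) \<Rightarrow> w - Tr a (preim N a (uminus ` Cset)))"

definition Mb :: "complex \<Rightarrow> triple \<Rightarrow> triple" where
  "Mb \<beta> x = (case x of (w, a, \<theta>) \<Rightarrow> (\<beta> * w, (\<lambda>l. \<beta> * a l), \<theta>))"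

definition Dt :: "nat \<Rightarrow> triple set" where
  "Dt N = {x \<in> DD N. piN N x \<in> Cset}"

definition D :: "nat \<Rightarrow> triple set" where
  "D N = {x \<in> DD N. piN N x \<in> Copen \<and>
      (\<forall>l\<in>{1..N}. fst (snd x) l \<notin> {z. Re z = 0} - {0})}"

definition Dpsi :: "nat \<Rightarrow> real \<Rightarrow> triple set" where
  "Dpsi N \<psi> = D N \<inter> {x \<in> DD N. Mb (exp (\<i> * of_real \<psi>)) x \<in> D N}
     \<inter> {x \<in> DD N. \<forall>t::real. 0 < sgn \<psi> * t \<and> sgn \<psi> * t < \<bar>\<psi>\<bar> \<longrightarrow>
            piN N (Mb (exp (\<i> * of_real t)) x) \<in> Cset}"

definition Dtpsi :: "nat \<Rightarrow> real \<Rightarrow> triple set" where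
  "Dtpsi N \<psi> = (if \<psi> = 0 then Dt N else
     {x \<in> DD N. \<forall>t::real. 0 \<le> sgn \<psi> * t \<and> sgn \<psi> * t \<le> \<bar>\<psi>\<bar> \<longrightarrow>
            piN N (Mb (exp (\<i> * of_real t)) x) \<in> Cset})"

end

theory Submission
  imports Defs
begin

text \<open>A rotation by a small negative angle \<open>\<omega>\<close> moves every point of \<open>\<C>\<close>, the positive
  imaginary axis included, into the open right half-plane; it keeps each nonzero \<open>a\<^sub>l\<close> on its
  side of \<open>-\<C>\<close> and pushes it off the imaginary axis. So \<open>\<pi>\<close> commutes with these rotations,
  and all small negative rotations of \<open>x\<close> and of \<open>M\<^bsub>exp(i\<psi>)\<^esub> x\<close> lie in \<open>\<D>\<^sub>N\<close>. For the arc
  condition, rotating by \<open>t\<close> after \<open>\<omega>\<close> is rotating by \<open>t + \<omega>\<close>: this angle lies either on the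
  closed arc between \<open>0\<close> and \<open>\<psi>\<close>, where the hypothesis applies, or slightly below its lower
  end, where it is a small negative rotation of that endpoint.\<close>

lemma Copen_subset_Cset: "Copen \<subseteq> Cset"
  by (auto simp: Copen_def Cset_def)

lemma Cset_trichotomy: "z \<in> Cset \<or> z = 0 \<or> - z \<in> Cset"
  by (auto simp: Cset_def complex_eq_iff)

lemma uminus_Cset_iff: "z \<in> uminus ` Cset \<longleftrightarrow> - z \<in> Cset"
  by (metis image_eqI minus_minus image_iff)

lemma Cset_disjoint_uminus_Cset: "z \<in> Cset \<Longrightarrow> z \<notin> uminus ` Cset"
  by (auto simp: Cset_def)

lemma eventually_sin_neg_at_left_0: "\<forall>\<^sub>F w in at_left 0. sin w < (0::real)"
proof -
  have "\<forall>\<^sub>F w in at_left 0. w \<in> {-pi<..<(0::real)}"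
    by (rule eventually_at_left_real) simp
  then show ?thesis
    by eventually_elim (use sin_gt_zero[of "- _"] in auto)
qed

lemma eventually_cis_mult_in_Copen:
  assumes "z \<in> Cset"
  shows "\<forall>\<^sub>F w in at_left 0. cis w * z \<in> Copen"
proof (cases "Re z > 0")
  case True
  have "((\<lambda>w. cos w * Re z - sin w * Im z) \<longlongrightarrow> cos 0 * Re z - sin 0 * Im z) (at_left 0)"
    by (intro tendsto_intros)
  then have "\<forall>\<^sub>F w in at_left 0. cos w * Re z - sin w * Im z > 0"
    using True by (auto dest: order_tendstoD(1))
  then show ?thesis
    by eventually_elim (simp add: Copen_def)
next
  case False
  with assms have imag: "Re z = 0" "Im z > 0"
    by (auto simp: Cset_def)
  from eventually_sin_neg_at_left_0 show ?thesis
    by eventually_elim (simp add: Copen_def imag mult_neg_pos)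
qed

lemma eventually_cis_mult_in_uminus_Cset_iff:
  "\<forall>\<^sub>F w in at_left 0. cis w * z \<in> uminus ` Cset \<longleftrightarrow> z \<in> uminus ` Cset"
  using Cset_trichotomy[of z]
proof (elim disjE)
  assume z: "z \<in> Cset"
  from eventually_cis_mult_in_Copen[OF z] show ?thesis
    by eventually_elim (metis Copen_subset_Cset Cset_disjoint_uminus_Cset subsetD z)
next
  assume z: "- z \<in> Cset"
  from eventually_cis_mult_in_Copen[OF z] show ?thesis
    by eventually_elim (use z Copen_subset_Cset in \<open>auto simp: uminus_Cset_iff\<close>)
qed simp

lemma eventually_Re_cis_mult_nonzero:
  assumes "z \<noteq> 0"
  shows "\<forall>\<^sub>F w in at_left 0. Re (cis w * z) \<noteq> 0"
  using Cset_trichotomy[of z] assms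
proof (elim disjE)
  assume "z \<in> Cset"
  from eventually_cis_mult_in_Copen[OF this] show ?thesis
    by eventually_elim (simp add: Copen_def)
next
  assume "- z \<in> Cset"
  from eventually_cis_mult_in_Copen[OF this] show ?thesis
    by eventually_elim (simp add: Copen_def)
qed simp

lemma Mb_Mb: "Mb b (Mb c x) = Mb (b * c) x"
  by (cases x) (simp add: Mb_def mult.assoc)

lemma Mb_1 [simp]: "Mb 1 x = x"
  by (cases x) (simp add: Mb_def)

lemma Mb_in_DD: "c \<noteq> 0 \<Longrightarrow> x \<in> DD N \<Longrightarrow> Mb c x \<in> DD N"
  by (cases x) (auto simp: Mb_def DD_def preim_def)

lemma D_subset_DD: "D N \<subseteq> DD N"
  by (auto simp: D_def)

lemma piN_in_Cset_if_in_D: "x \<in> D N \<Longrightarrow> piN N x \<in> Cset"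
  using Copen_subset_Cset by (auto simp: D_def)

lemma eventually_piN_Mb_cis:
  "\<forall>\<^sub>F w in at_left 0. piN N (Mb (cis w) x) = cis w * piN N x"
proof -
  obtain w0 a \<theta> where x: "x = (w0, a, \<theta>)"
    by (cases x) auto
  have "\<forall>\<^sub>F w in at_left 0. \<forall>l\<in>{1..N}. cis w * a l \<in> uminus ` Cset \<longleftrightarrow> a l \<in> uminus ` Cset"
    by (intro eventually_ball_finite ballI eventually_cis_mult_in_uminus_Cset_iff) simp
  then show ?thesis
  proof eventually_elim
    case (elim w)
    then have "preim N (\<lambda>l. cis w * a l) (uminus ` Cset) = preim N a (uminus ` Cset)"
      by (auto simp: preim_def)
    then show ?case
      by (simp add: x Mb_def piN_def Tr_def sum_distrib_left right_diff_distrib)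
  qed
qed

lemma eventually_Mb_cis_in_D:
  assumes "x \<in> DD N" and "piN N x \<in> Cset"
  shows "\<forall>\<^sub>F w in at_left 0. Mb (cis w) x \<in> D N"
proof -
  obtain w0 a \<theta> where x: "x = (w0, a, \<theta>)"
    by (cases x) auto
  have "\<forall>\<^sub>F w in at_left 0. \<forall>l\<in>{1..N}. a l \<noteq> 0 \<longrightarrow> Re (cis w * a l) \<noteq> 0"
  proof (intro eventually_ball_finite ballI)
    fix l
    show "\<forall>\<^sub>F w in at_left 0. a l \<noteq> 0 \<longrightarrow> Re (cis w * a l) \<noteq> 0"
      using eventually_Re_cis_mult_nonzero[of "a l"] by (cases "a l = 0") (auto elim: eventually_mono)
  qed simp
  with eventually_piN_Mb_cis[of N x] eventually_cis_mult_in_Copen[OF assms(2)]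
  show ?thesis
  proof eventually_elim
    case (elim w)
    moreover have "Mb (cis w) x \<in> DD N"
      using assms(1) by (simp add: Mb_in_DD cis_neq_zero)
    ultimately show ?case
      by (auto simp: D_def x Mb_def)
  qed
qed

text \<open>For \<open>\<psi> = 0\<close> the left-hand side holds for every \<open>t\<close>; this is why \<^const>\<open>Dtpsi\<close> treats
  \<open>\<psi> = 0\<close> separately.\<close>

lemma sgn_mult_closed_bounds_iff:
  fixes \<psi> t :: real
  assumes "\<psi> \<noteq> 0"
  shows "0 \<le> sgn \<psi> * t \<and> sgn \<psi> * t \<le> \<bar>\<psi>\<bar> \<longleftrightarrow> min 0 \<psi> \<le> t \<and> t \<le> max 0 \<psi>"
  using assms by (cases "\<psi> > 0") (auto simp: sgn_if)

lemma sgn_mult_open_bounds_iff: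
  fixes \<psi> t :: real
  shows "0 < sgn \<psi> * t \<and> sgn \<psi> * t < \<bar>\<psi>\<bar> \<longleftrightarrow> min 0 \<psi> < t \<and> t < max 0 \<psi>"
  by (cases "\<psi> > 0"; cases "\<psi> = 0") (auto simp: sgn_if)

lemma Dtpsi_imp_arc:
  assumes "x \<in> Dtpsi N \<psi>"
  shows "x \<in> DD N" and "\<And>t. min 0 \<psi> \<le> t \<Longrightarrow> t \<le> max 0 \<psi> \<Longrightarrow> piN N (Mb (cis t) x) \<in> Cset"
  using assms sgn_mult_closed_bounds_iff[of \<psi>]
  by (auto simp: Dtpsi_def Dt_def cis_conv_exp split: if_splits)

lemma Dpsi_intro:
  assumes "x \<in> D N" and "Mb (cis \<psi>) x \<in> D N"
    and "\<And>t. min 0 \<psi> < t \<Longrightarrow> t < max 0 \<psi> \<Longrightarrow> piN N (Mb (cis t) x) \<in> Cset"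
  shows "x \<in> Dpsi N \<psi>"
  using assms D_subset_DD sgn_mult_open_bounds_iff[of \<psi>]
  by (auto simp: Dpsi_def cis_conv_exp)

lemma Mb_cis_in_Dpsi:
  fixes b \<omega> \<psi> :: real
  assumes arc: "\<And>t. min 0 \<psi> \<le> t \<Longrightarrow> t \<le> max 0 \<psi> \<Longrightarrow> piN N (Mb (cis t) x) \<in> Cset"
    and rotations: "\<And>w. b < w \<Longrightarrow> w < 0 \<Longrightarrow> \<forall>s\<in>{0, \<psi>, min 0 \<psi>}. Mb (cis w) (Mb (cis s) x) \<in> D N"
    and "b < \<omega>" "\<omega> < 0"
  shows "Mb (cis \<omega>) x \<in> Dpsi N \<psi>"
proof (rule Dpsi_intro)
  show "Mb (cis \<omega>) x \<in> D N" "Mb (cis \<psi>) (Mb (cis \<omega>) x) \<in> D N"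
    using rotations[of \<omega>] assms(3,4) by (simp_all add: Mb_Mb mult.commute)
next
  fix t assume "min 0 \<psi> < t" "t < max 0 \<psi>"
  then consider "min 0 \<psi> \<le> t + \<omega>" "t + \<omega> \<le> max 0 \<psi>" | "b < t + \<omega> - min 0 \<psi>" "t + \<omega> < min 0 \<psi>"
    using assms(3,4) by linarith
  then show "piN N (Mb (cis t) (Mb (cis \<omega>) x)) \<in> Cset"
  proof cases
    case 1
    then show ?thesis
      using arc[of "t + \<omega>"] by (simp add: Mb_Mb cis_mult)
  next
    case 2
    have "Mb (cis t) (Mb (cis \<omega>) x) = Mb (cis (t + \<omega> - min 0 \<psi>)) (Mb (cis (min 0 \<psi>)) x)"
      by (simp add: Mb_Mb cis_mult)
    with 2 show ?thesis
      using piN_in_Cset_if_in_D rotations[of "t + \<omega> - min 0 \<psi>"] by simp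
  qed
qed

theorem lemma7:
  fixes N :: nat and \<psi> :: real and x :: triple
  assumes "N \<ge> 1" and "-pi \<le> \<psi>" and "\<psi> \<le> pi" and "x \<in> Dtpsi N \<psi>"
  shows "\<exists>\<omega>0::real. \<omega>0 < 0 \<and>
           (\<forall>\<omega>::real. \<omega>0 \<le> \<omega> \<and> \<omega> < 0 \<longrightarrow> Mb (exp (\<i> * of_real \<omega>)) x \<in> Dpsi N \<psi>)"
proof -
  note arc = Dtpsi_imp_arc[OF assms(4)]
  have "\<forall>\<^sub>F w in at_left 0. \<forall>s\<in>{0, \<psi>, min 0 \<psi>}. Mb (cis w) (Mb (cis s) x) \<in> D N"
  proof (intro eventually_ball_finite ballI eventually_Mb_cis_in_D)
    fix s assume "s \<in> {0, \<psi>, min 0 \<psi>}"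
    then show "Mb (cis s) x \<in> DD N" "piN N (Mb (cis s) x) \<in> Cset"
      using arc(1) arc(2)[of s] by (auto simp: Mb_in_DD cis_neq_zero)
  qed simp
  then obtain b where "b < 0"
    and rotations: "\<And>w. b < w \<Longrightarrow> w < 0 \<Longrightarrow> \<forall>s\<in>{0, \<psi>, min 0 \<psi>}. Mb (cis w) (Mb (cis s) x) \<in> D N"
    by (subst (asm) eventually_at_left[of "-1"]) auto
  have "Mb (cis \<omega>) x \<in> Dpsi N \<psi>" if "b / 2 \<le> \<omega>" "\<omega> < 0" for \<omega>
    using Mb_cis_in_Dpsi[OF arc(2) rotations] that \<open>b < 0\<close> by simp
  with \<open>b < 0\<close> show ?thesis
    by (intro exI[of _ "b / 2"]) (simp add: cis_conv_exp)
qed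

end
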